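(* Let $a_1,\dots,a_n\in\mathbb{R}^d$ be nonzero vectors. Let $a'_1,\dots,a'_{n'}$ be a second list obtained from the first by either adding one nonzero vector or removing one vector. Fix $T\ge1$, points $x^{(1)},\dots,x^{(T)}\in\mathbb{R}^d$, and a vector $g\in\mathbb{R}^d$. For the first list and each $t\in[T]$, define - $S^{(t)}=\{i:\langle\overline{a}_i,x^{(t)}\rangle\le0\}$ and $m^{(t)}=|S^{(t)}|$, where we assume $m^{(t)}\ge1$; - $\overline{\lambda}_i=\frac1T\sum_{t=1}^T\frac{\mathbf{1}[i\in S^{(t)}]}{m^{(t)}}$ for each $i$; - $P=\{i:\langle\overline{a}_i,g\rangle\ge0\}$ and $c=\sum_{i\in P}\overline{\lambda}_i\overline{a}_i$. Define $S'^{(t)}$, $m'^{(t)}$, $\overline{\lambda}'$, $P'$ and $c'$ in the same way from the second list, with the same $x^{(1)},\dots,x^{(T)}$ and $g$, and assume $m'^{(t)}\ge1$ for all $t$. Let $m=\min_{t\in[T]}\min(m^{(t)},m'^{(t)})$. Then $\|c-c'\|_2\le\frac{2}{m}$.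
   Context: For a nonzero vector $a$, $\overline{a}=a/\|a\|_2$. $\mathbf{1}[\cdot]$ denotes the indicator function. *)

theory Defs
  imports "HOL-Analysis.Analysis"
begin

text \<open>Vectors in R^d are elements of a type of class euclidean_space (d = DIM('a)).
  The normalized vector a/|a| is the library's sgn a = a /R norm a.
  The points x^(1..T) are a function xs :: nat => 'a on {1..T}.\<close>

definition Sset :: "'a::euclidean_space list \<Rightarrow> 'a \<Rightarrow> nat set" where
  "Sset a x = {i. i < length a \<and> inner (sgn (a ! i)) x \<le> 0}"

definition lam_bar :: "'a::euclidean_space list \<Rightarrow> nat \<Rightarrow> (nat \<Rightarrow> 'a) \<Rightarrow> nat \<Rightarrow> real" where
  "lam_bar a T xs i =
     (1 / real T) * (\<Sum>t\<in>{1..T}. (if i \<in> Sset a (xs t) then 1 else 0) / real (card (Sset a (xs t))))"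

definition Pset :: "'a::euclidean_space list \<Rightarrow> 'a \<Rightarrow> nat set" where
  "Pset a g = {i. i < length a \<and> inner (sgn (a ! i)) g \<ge> 0}"

definition cvec :: "'a::euclidean_space list \<Rightarrow> nat \<Rightarrow> (nat \<Rightarrow> 'a) \<Rightarrow> 'a \<Rightarrow> 'a" where
  "cvec a T xs g = (\<Sum>i\<in>Pset a g. lam_bar a T xs i *\<^sub>R sgn (a ! i))"

definition add_or_remove_one :: "'a::euclidean_space list \<Rightarrow> 'a list \<Rightarrow> bool" where
  "add_or_remove_one a a' \<longleftrightarrow>
     (\<exists>k v. k \<le> length a \<and> v \<noteq> 0 \<and> a' = take k a @ [v] @ drop k a) \<or>
     (\<exists>k. k < length a \<and> a' = take k a @ drop (Suc k) a)"

end

theory Submission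
  imports Defs
begin

text \<open>For each point \<open>x\<close> the vector \<open>c\<close> receives the contribution
  \<open>(1/m) \<Sum>\<^bsub>i \<in> S \<inter> P\<^esub> sgn a\<^sub>i\<close>, and \<open>c\<close> is the mean of these contributions over the points.
  A contribution only depends on the multiset of vectors. Adding a vector \<open>v\<close> changes it only if
  \<open>v \<in> S\<close>; then, with \<open>s\<close> the old sum (of norm at most \<open>m\<close>) and \<open>h\<close> the new summand (of norm
  at most 1), the change is \<open>s/m - (s + h)/(m + 1) = s/(m(m + 1)) - h/(m + 1)\<close>, of norm at most
  \<open>2/(m + 1)\<close>. Removing a vector is the same step read backwards, and averaging keeps the bound.\<close>

lemma sum_nth_filter_eq_sum_mset:
  "(\<Sum>i | i < length xs \<and> P (xs ! i). f (xs ! i)) = (\<Sum>u\<in>#{#u \<in># mset xs. P u#}. f u)"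
proof -
  have "(\<Sum>i | i < length xs \<and> P (xs ! i). f (xs ! i))
      = (\<Sum>i<length xs. if P (xs ! i) then f (xs ! i) else 0)"
    by (simp add: sum.If_cases Collect_conj_eq lessThan_def Int_commute)
  also have "\<dots> = sum_list (map f (filter P xs))"
    by (subst sum_list_map_filter') (simp add: sum_list_sum_nth atLeast0LessThan)
  also have "\<dots> = (\<Sum>u\<in>#{#u \<in># mset xs. P u#}. f u)"
    by (simp flip: sum_mset_sum_list mset_map mset_filter)
  finally show ?thesis .
qed

lemma norm_sum_mset_sgn_le:
  fixes M :: "'a::real_normed_vector multiset"
  shows "norm (\<Sum>u\<in>#M. sgn u) \<le> size M"
proof (induction M)
  case empty
  then show ?case by simp
next
  case (add v M)
  have "norm (sgn v + (\<Sum>u\<in>#M. sgn u)) \<le> norm (sgn v) + norm (\<Sum>u\<in>#M. sgn u)"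
    by (rule norm_triangle_ineq)
  also have "\<dots> \<le> 1 + size M"
    using add.IH by (simp add: norm_sgn)
  finally show ?case by simp
qed

lemma norm_mean_update_le:
  fixes s h :: "'a::real_normed_vector" and m :: real
  assumes "m > 0" and "norm s \<le> m" and "norm h \<le> 1"
  shows "norm ((1 / m) *\<^sub>R s - (1 / (m + 1)) *\<^sub>R (s + h)) \<le> 2 / (m + 1)"
proof -
  have "(1 / m) *\<^sub>R s - (1 / (m + 1)) *\<^sub>R (s + h)
      = (1 / (m * (m + 1))) *\<^sub>R s - (1 / (m + 1)) *\<^sub>R h"
    using assms(1) by (simp add: field_simps scaleR_add_right flip: scaleR_diff_left)
  also have "norm \<dots> \<le> norm s / (m * (m + 1)) + norm h / (m + 1)"
    using assms(1) norm_triangle_ineq4[of "(1 / (m * (m + 1))) *\<^sub>R s" "(1 / (m + 1)) *\<^sub>R h"]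
    by simp
  also have "\<dots> \<le> m / (m * (m + 1)) + 1 / (m + 1)"
    using assms by (intro add_mono divide_right_mono) auto
  also have "\<dots> = 2 / (m + 1)"
    using assms(1) by simp
  finally show ?thesis .
qed

lemma norm_mean_le:
  fixes f :: "'b \<Rightarrow> 'a::real_normed_vector"
  assumes "finite I" and "I \<noteq> {}" and "\<And>t. t \<in> I \<Longrightarrow> norm (f t) \<le> B"
  shows "norm ((1 / real (card I)) *\<^sub>R (\<Sum>t\<in>I. f t)) \<le> B"
proof -
  have "norm (\<Sum>t\<in>I. f t) \<le> real (card I) * B"
    using sum_norm_le[of I f "\<lambda>_. B"] assms(3) by simp
  moreover have "card I > 0"
    using assms(1,2) by (simp add: card_gt_0_iff)
  ultimately show ?thesis
    by (simp add: field_simps)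
qed

definition active :: "'a::real_inner multiset \<Rightarrow> 'a \<Rightarrow> 'a multiset" where
  "active A x = {#u \<in># A. inner (sgn u) x \<le> 0#}"

definition contrib :: "'a::real_inner multiset \<Rightarrow> 'a \<Rightarrow> 'a \<Rightarrow> 'a" where
  "contrib A x g =
     (1 / real (size (active A x))) *\<^sub>R (\<Sum>u\<in>#{#u \<in># active A x. 0 \<le> inner (sgn u) g#}. sgn u)"

lemma card_Sset_eq_size_active: "card (Sset a x) = size (active (mset a) x)"
  unfolding Sset_def active_def by (simp add: length_filter_conv_card flip: mset_filter)

lemma sum_Pset_indicator_Sset_eq_contrib:
  "(\<Sum>i\<in>Pset a g. ((if i \<in> Sset a x then 1 else 0) / real (card (Sset a x))) *\<^sub>R sgn (a ! i))
     = contrib (mset a) x g"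
proof -
  have "Sset a x \<inter> Pset a g = {i. i < length a \<and> inner (sgn (a ! i)) x \<le> 0 \<and> 0 \<le> inner (sgn (a ! i)) g}"
    unfolding Sset_def Pset_def by auto
  then have sum_eq: "(\<Sum>i\<in>Sset a x \<inter> Pset a g. sgn (a ! i))
      = (\<Sum>u\<in>#{#u \<in># active (mset a) x. 0 \<le> inner (sgn u) g#}. sgn u)"
    using sum_nth_filter_eq_sum_mset[where xs = a and f = sgn and
      P = "\<lambda>u. inner (sgn u) x \<le> 0 \<and> 0 \<le> inner (sgn u) g"]
    by (simp add: active_def filter_filter_mset)
  have "finite (Pset a g)"
    unfolding Pset_def by simp
  then have "(\<Sum>i\<in>Pset a g. ((if i \<in> Sset a x then 1 else 0) / real (card (Sset a x))) *\<^sub>R sgn (a ! i))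
      = (1 / real (card (Sset a x))) *\<^sub>R (\<Sum>i\<in>Sset a x \<inter> Pset a g. sgn (a ! i))"
    by (auto simp: scaleR_sum_right sum.inter_restrict Int_commute intro!: sum.cong)
  then show ?thesis
    unfolding contrib_def sum_eq card_Sset_eq_size_active .
qed

lemma cvec_eq_mean_contrib:
  "cvec a T xs g = (1 / real T) *\<^sub>R (\<Sum>t\<in>{1..T}. contrib (mset a) (xs t) g)"
proof -
  have "cvec a T xs g = (1 / real T) *\<^sub>R (\<Sum>i\<in>Pset a g. \<Sum>t\<in>{1..T}.
          ((if i \<in> Sset a (xs t) then 1 else 0) / real (card (Sset a (xs t)))) *\<^sub>R sgn (a ! i))"
    unfolding cvec_def lam_bar_def scaleR_sum_right
    by (intro sum.cong refl) (simp add: scaleR_sum_left sum_divide_distrib mult.commute)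
  also have "\<dots> = (1 / real T) *\<^sub>R (\<Sum>t\<in>{1..T}. \<Sum>i\<in>Pset a g.
          ((if i \<in> Sset a (xs t) then 1 else 0) / real (card (Sset a (xs t)))) *\<^sub>R sgn (a ! i))"
    by (subst sum.swap) (rule refl)
  finally show ?thesis
    by (simp add: sum_Pset_indicator_Sset_eq_contrib)
qed

lemma norm_contrib_add_mset_diff_le:
  assumes "size (active A x) \<ge> 1"
  shows "norm (contrib A x g - contrib (add_mset v A) x g) \<le> 2 / size (active A x)"
proof (cases "inner (sgn v) x \<le> 0")
  case False
  then show ?thesis
    by (simp add: contrib_def active_def)
next
  case True
  define m where "m = real (size (active A x))"
  define s where "s = (\<Sum>u\<in>#{#u \<in># active A x. 0 \<le> inner (sgn u) g#}. sgn u)"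
  define h where "h = (if 0 \<le> inner (sgn v) g then sgn v else 0)"
  have "contrib (add_mset v A) x g = (1 / (m + 1)) *\<^sub>R (s + h)"
    using True by (simp add: contrib_def active_def m_def s_def h_def add.commute)
  moreover have "contrib A x g = (1 / m) *\<^sub>R s"
    by (simp add: contrib_def m_def s_def)
  moreover have "norm s \<le> m"
    unfolding s_def m_def
    by (rule order.trans[OF norm_sum_mset_sgn_le]) (simp add: size_filter_mset_lesseq)
  moreover have "norm h \<le> 1"
    by (simp add: h_def norm_sgn)
  ultimately have "norm (contrib A x g - contrib (add_mset v A) x g) \<le> 2 / (m + 1)"
    using assms by (simp add: m_def norm_mean_update_le)
  also have "\<dots> \<le> 2 / m"
    using assms by (simp add: m_def frac_le)
  finally show ?thesis
    unfolding m_def .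
qed

lemma norm_contrib_add_or_remove_diff_le:
  assumes "A' = add_mset v A \<or> A = add_mset v A'"
    and "size (active A x) \<ge> 1" and "size (active A' x) \<ge> 1"
  shows "norm (contrib A x g - contrib A' x g)
           \<le> 2 / min (size (active A x)) (size (active A' x))"
  using assms(1)
proof
  assume "A' = add_mset v A"
  moreover have "size (active A x) \<le> size (active (add_mset v A) x)"
    by (simp add: active_def)
  ultimately show ?thesis
    using norm_contrib_add_mset_diff_le[OF assms(2)] by (simp add: min_def)
next
  assume "A = add_mset v A'"
  moreover have "size (active A' x) \<le> size (active (add_mset v A') x)"
    by (simp add: active_def)
  ultimately show ?thesis
    using norm_contrib_add_mset_diff_le[OF assms(3)] by (simp add: min_def norm_minus_commute)
qed

lemma add_or_remove_one_mset:
  assumes "add_or_remove_one a a'"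
  shows "(\<exists>v. mset a' = add_mset v (mset a)) \<or> (\<exists>v. mset a = add_mset v (mset a'))"
  using assms unfolding add_or_remove_one_def
proof (elim disjE exE conjE)
  fix k v assume "a' = take k a @ [v] @ drop k a"
  then have "mset a' = add_mset v (mset (take k a @ drop k a))"
    by (simp del: append_take_drop_id)
  then show ?thesis by auto
next
  fix k assume "k < length a" and "a' = take k a @ drop (Suc k) a"
  then have "mset a = add_mset (a ! k) (mset a')"
    by (metis id_take_nth_drop mset.simps(2) mset_append union_mset_add_mset_right)
  then show ?thesis by auto
qed

lemma norm_contrib_diff_le:
  assumes "add_or_remove_one a a'" and "card (Sset a x) \<ge> 1" and "card (Sset a' x) \<ge> 1"
  shows "norm (contrib (mset a) x g - contrib (mset a') x g)
           \<le> 2 / min (card (Sset a x)) (card (Sset a' x))"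
proof -
  obtain v where "mset a' = add_mset v (mset a) \<or> mset a = add_mset v (mset a')"
    using add_or_remove_one_mset[OF assms(1)] by blast
  then show ?thesis
    using norm_contrib_add_or_remove_diff_le assms(2,3) by (simp add: card_Sset_eq_size_active)
qed

theorem claim3p5:
  fixes a a' :: "'a::euclidean_space list" and T :: nat and xs :: "nat \<Rightarrow> 'a" and g :: 'a
  assumes "\<forall>i<length a. a ! i \<noteq> 0"
    and "add_or_remove_one a a'"
    and "T \<ge> 1"
    and "\<forall>t\<in>{1..T}. card (Sset a (xs t)) \<ge> 1"
    and "\<forall>t\<in>{1..T}. card (Sset a' (xs t)) \<ge> 1"
  shows "norm (cvec a T xs g - cvec a' T xs g)
           \<le> 2 / real (Min ((\<lambda>t. min (card (Sset a (xs t))) (card (Sset a' (xs t)))) ` {1..T}))"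
proof -
  define m where "m t = min (card (Sset a (xs t))) (card (Sset a' (xs t)))" for t
  define M where "M = Min (m ` {1..T})"
  have "M \<in> m ` {1..T}"
    unfolding M_def using assms(3) by (intro Min_in) auto
  then have "M \<ge> 1"
    using assms(4,5) by (auto simp: m_def)
  have contrib_bound: "norm (contrib (mset a) (xs t) g - contrib (mset a') (xs t) g) \<le> 2 / M"
    if t: "t \<in> {1..T}" for t
  proof -
    have "M \<le> m t"
      unfolding M_def using t by (intro Min_le) auto
    then have "2 / m t \<le> 2 / M"
      using \<open>M \<ge> 1\<close> by (simp add: frac_le)
    then show ?thesis
      using norm_contrib_diff_le[OF assms(2)] assms(4,5) t unfolding m_def by (meson order.trans)
  qed
  have mean: "cvec a T xs g - cvec a' T xs g = (1 / real (card {1..T})) *\<^sub>R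
          (\<Sum>t\<in>{1..T}. contrib (mset a) (xs t) g - contrib (mset a') (xs t) g)"
    by (simp add: cvec_eq_mean_contrib sum_subtractf scaleR_diff_right)
  have "norm (cvec a T xs g - cvec a' T xs g) \<le> 2 / M"
    unfolding mean using assms(3) by (intro norm_mean_le contrib_bound) auto
  then show ?thesis
    unfolding M_def m_def .
qed

end
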